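(* The inequality $\psi'(t)<e^{1/t}-1$ holds for all $t\in(0,\infty)$. More generally, the function $t\mapsto e^{1/t}-\psi'(t)$ is completely monotonic on $(0,\infty)$.
   Context: $\psi(x)=\Gamma'(x)/\Gamma(x)$ is the digamma function, where $\Gamma$ is Euler's gamma function, and $\psi'$ is its derivative (the trigamma function). A function $f$ is completely monotonic on an interval $I$ if $f$ has derivatives of all orders on $I$ and $0\le(-1)^k f^{(k)}(x)<\infty$ for all $k\ge0$ and $x\in I$. *)

theory Defs
  imports "HOL-Analysis.Analysis"
begin

definition completely_monotonic_on :: "(real \<Rightarrow> real) \<Rightarrow> real set \<Rightarrow> bool" where
  "completely_monotonic_on f I \<longleftrightarrow>
     (\<forall>k. \<forall>x\<in>I. ((deriv ^^ k) f has_real_derivative (deriv ^^ Suc k) f x) (at x)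
                  \<and> 0 \<le> (-1) ^ k * (deriv ^^ k) f x)"

end

theory Submission
  imports Defs
begin

text \<open>Write \<open>exp(1/t) - \<psi>'(t) = 1 + E(t) + (q(t) - \<psi>'(t))\<close> with
  \<open>q(t) = 1/t + 1/(2t^2) + 1/(6t^3)\<close> and \<open>E(t) = \<Sum>\<^sub>m\<^sub>\<ge>\<^sub>4 t^-m/m!\<close>; the tail \<open>E\<close> is
  completely monotonic term by term. The identity \<open>q(t) - q(t+1) - 1/t^2 = 1/(6 t^3 (t+1)^3)\<close>
  and the Leibniz rule give \<open>(-1)^k (q(t) - q(t+1))^(k) \<ge> (-1)^k (t^-2)^(k) = (k+1)!/t^(k+2)\<close>.
  Telescoping along \<open>t, t+1, t+2, \<dots>\<close>, with \<open>(-1)^k q^(k) \<ge> 0\<close>, bounds the series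
  \<open>(-1)^k \<psi>^(k+1)(t) = (k+1)! \<Sum>\<^sub>j (t+j)^-(k+2)\<close> by \<open>(-1)^k q^(k)(t)\<close>.\<close>

definition deriv_tower :: "(nat \<Rightarrow> real \<Rightarrow> real) \<Rightarrow> real set \<Rightarrow> bool" where
  "deriv_tower D S \<longleftrightarrow> (\<forall>k. \<forall>x\<in>S. (D k has_real_derivative D (Suc k) x) (at x))"

lemma higher_deriv_eq_deriv_tower:
  assumes "open S" "deriv_tower D S" "\<And>x. x \<in> S \<Longrightarrow> f x = D 0 x" "x \<in> S"
  shows "(deriv ^^ k) f x = D k x"
  using assms(4)
proof (induction k arbitrary: x)
  case 0
  then show ?case using assms(3) by simp
next
  case (Suc k)
  have "\<forall>\<^sub>F y in nhds x. (deriv ^^ k) f y = D k y"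
    using eventually_nhds_in_open[OF assms(1) Suc.prems] by (rule eventually_mono) (rule Suc.IH)
  then have "(deriv ^^ Suc k) f x = deriv (D k) x"
    by (simp add: deriv_cong_ev)
  also have "\<dots> = D (Suc k) x"
    using assms(2) Suc.prems unfolding deriv_tower_def by (blast intro: DERIV_imp_deriv)
  finally show ?case .
qed

lemma has_higher_deriv_deriv_tower:
  assumes "open S" "deriv_tower D S" "\<And>x. x \<in> S \<Longrightarrow> f x = D 0 x" "x \<in> S"
  shows "((deriv ^^ k) f has_real_derivative (deriv ^^ Suc k) f x) (at x)"
proof -
  have "\<forall>\<^sub>F y in nhds x. (deriv ^^ k) f y = D k y"
    using eventually_nhds_in_open[OF assms(1,4)]
    by (rule eventually_mono) (rule higher_deriv_eq_deriv_tower[OF assms(1-3)])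
  from DERIV_cong_ev[OF refl this refl]
  have "((deriv ^^ k) f has_real_derivative D (Suc k) x) (at x)"
    using assms(2,4) unfolding deriv_tower_def by blast
  then show ?thesis
    by (simp only: higher_deriv_eq_deriv_tower[OF assms, of "Suc k"])
qed

lemma deriv_tower_unique:
  assumes "open S" "deriv_tower D S" "deriv_tower E S" "\<And>x. x \<in> S \<Longrightarrow> D 0 x = E 0 x" "x \<in> S"
  shows "D k x = E k x"
  using higher_deriv_eq_deriv_tower[OF assms(1,2) _ assms(5), of "D 0" k]
    higher_deriv_eq_deriv_tower[OF assms(1,3) assms(4) assms(5), of k]
  by simp

lemma completely_monotonic_onI_deriv_tower:
  assumes "open S" "deriv_tower D S" "\<And>x. x \<in> S \<Longrightarrow> f x = D 0 x"
    and "\<And>k x. x \<in> S \<Longrightarrow> 0 \<le> (-1) ^ k * D k x"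
  shows "completely_monotonic_on f S"
  unfolding completely_monotonic_on_def
  using has_higher_deriv_deriv_tower[OF assms(1-3)] higher_deriv_eq_deriv_tower[OF assms(1-3)] assms(4)
  by simp

lemma deriv_tower_add: "deriv_tower D S \<Longrightarrow> deriv_tower E S \<Longrightarrow> deriv_tower (\<lambda>k x. D k x + E k x) S"
  unfolding deriv_tower_def by (auto intro: DERIV_add)

lemma deriv_tower_diff: "deriv_tower D S \<Longrightarrow> deriv_tower E S \<Longrightarrow> deriv_tower (\<lambda>k x. D k x - E k x) S"
  unfolding deriv_tower_def by (auto intro: DERIV_diff)

lemma deriv_tower_cmult: "deriv_tower D S \<Longrightarrow> deriv_tower (\<lambda>k x. c * D k x) S"
  unfolding deriv_tower_def by (auto intro: DERIV_cmult)

lemma deriv_tower_const: "deriv_tower (\<lambda>k x. if k = 0 then c else 0) S"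
  unfolding deriv_tower_def by auto

definition prod_tower :: "(nat \<Rightarrow> real \<Rightarrow> real) \<Rightarrow> (nat \<Rightarrow> real \<Rightarrow> real) \<Rightarrow> nat \<Rightarrow> real \<Rightarrow> real" where
  "prod_tower D E n x = (\<Sum>i\<le>n. of_nat (n choose i) * D i x * E (n - i) x)"

lemma prod_tower_Suc:
  "(\<Sum>i\<le>n. of_nat (n choose i) * (D (Suc i) x * E (n - i) x + D i x * E (Suc (n - i)) x))
     = prod_tower D E (Suc n) x"
proof -
  have choose: "Suc n choose i = (n choose i) + (if i = 0 then 0 else n choose (i - 1))" for i
    by (cases i) simp_all
  have "(\<Sum>i\<le>n. of_nat (n choose i) * (D (Suc i) x * E (n - i) x + D i x * E (Suc (n - i)) x))
      = E 0 x * D (Suc n) x + (\<Sum>i\<le>n. D i x * (of_nat (Suc n choose i) * E (Suc n - i) x))"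
    apply (simp add: choose algebra_simps sum.distrib atMost_atLeast0)
    apply (subst (4) sum_Suc_reindex)
    apply (auto simp: algebra_simps Suc_diff_le intro: sum.cong)
    done
  then show ?thesis
    unfolding prod_tower_def by (simp add: algebra_simps)
qed

lemma deriv_tower_prod_tower:
  assumes "deriv_tower D S" "deriv_tower E S"
  shows "deriv_tower (prod_tower D E) S"
  unfolding deriv_tower_def
proof (intro allI ballI)
  fix n x assume "x \<in> S"
  then have "(D i has_real_derivative D (Suc i) x) (at x)" "(E i has_real_derivative E (Suc i) x) (at x)" for i
    using assms unfolding deriv_tower_def by auto
  then have "((\<lambda>x. \<Sum>i\<le>n. of_nat (n choose i) * D i x * E (n - i) x) has_real_derivative
      (\<Sum>i\<le>n. of_nat (n choose i) * (D (Suc i) x * E (n - i) x + D i x * E (Suc (n - i)) x))) (at x)"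
    by (intro DERIV_sum) (auto intro!: derivative_eq_intros simp: algebra_simps)
  then show "(prod_tower D E n has_real_derivative prod_tower D E (Suc n) x) (at x)"
    unfolding prod_tower_Suc unfolding prod_tower_def .
qed

lemma prod_tower_alternating_nonneg:
  assumes "\<And>i. 0 \<le> (-1) ^ i * D i x" "\<And>i. 0 \<le> (-1) ^ i * E i x"
  shows "0 \<le> (-1) ^ n * prod_tower D E n x"
proof -
  have "(-1) ^ n * prod_tower D E n x
      = (\<Sum>i\<le>n. of_nat (n choose i) * ((-1) ^ i * D i x) * ((-1) ^ (n - i) * E (n - i) x))"
    unfolding prod_tower_def sum_distrib_left
  proof (rule sum.cong[OF refl])
    fix i assume "i \<in> {..n}"
    then have "(-1::real) ^ n = (-1) ^ i * (-1) ^ (n - i)"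
      by (simp flip: power_add)
    then show "(-1) ^ n * (of_nat (n choose i) * D i x * E (n - i) x)
        = of_nat (n choose i) * ((-1) ^ i * D i x) * ((-1) ^ (n - i) * E (n - i) x)"
      by simp
  qed
  also have "\<dots> \<ge> 0"
    by (intro sum_nonneg mult_nonneg_nonneg assms) simp
  finally show ?thesis .
qed

definition recip_power_tower :: "nat \<Rightarrow> real \<Rightarrow> nat \<Rightarrow> real \<Rightarrow> real" where
  "recip_power_tower n a k x = (-1) ^ k * pochhammer (real n) k * inverse (x + a) ^ (n + k)"

lemma has_real_derivative_recip_power_tower:
  assumes "x + a > 0"
  shows "(recip_power_tower n a k has_real_derivative recip_power_tower n a (Suc k) x) (at x)"
proof -
  have "((\<lambda>x. inverse (x + a) ^ m) has_real_derivative - (real m * inverse (x + a) ^ Suc m)) (at x)" for m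
  proof (cases m)
    case (Suc j)
    show ?thesis
      by (rule DERIV_cong[OF DERIV_power[OF DERIV_inverse_fun[OF DERIV_add[OF DERIV_ident DERIV_const]]]])
        (use assms Suc in \<open>simp_all add: power2_eq_square field_simps\<close>)
  qed simp
  then show ?thesis
    unfolding recip_power_tower_def[abs_def]
    by (rule DERIV_cong[OF DERIV_cmult]) (simp add: pochhammer_Suc algebra_simps)
qed

lemma deriv_tower_recip_power_tower: "a \<ge> 0 \<Longrightarrow> deriv_tower (recip_power_tower n a) {0<..}"
  unfolding deriv_tower_def by (auto intro!: has_real_derivative_recip_power_tower)

lemma recip_power_tower_alternating:
  "(-1) ^ k * recip_power_tower n a k x = pochhammer (real n) k * inverse (x + a) ^ (n + k)"
  unfolding recip_power_tower_def by (simp flip: power_add add: mult_2[symmetric] power_mult)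

lemma recip_power_tower_alternating_nonneg: "x + a > 0 \<Longrightarrow> 0 \<le> (-1) ^ k * recip_power_tower n a k x"
  unfolding recip_power_tower_alternating by (simp add: pochhammer_of_nat)

lemma deriv_tower_Polygamma: "deriv_tower (\<lambda>k x. Polygamma (m + k) x) {0<..}"
  unfolding deriv_tower_def
proof (intro allI ballI)
  fix k and x :: real
  assume "x \<in> {0<..}"
  then have "x \<notin> \<int>\<^sub>\<le>\<^sub>0"
    by (auto elim: nonpos_Ints_cases)
  then show "((\<lambda>x. Polygamma (m + k) x) has_real_derivative Polygamma (m + Suc k) x) (at x)"
    using has_field_derivative_Polygamma[of x "m + k"] by simp
qed

lemma power_series_times_derivative_sums:
  fixes c :: "nat \<Rightarrow> real"
  assumes "\<And>y. summable (\<lambda>n. c n * y ^ n)"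
  shows "(\<lambda>n. real n * c n * x ^ n) sums (x * (\<Sum>n. diffs c n * x ^ n))"
proof -
  have "(\<lambda>n. x * (diffs c n * x ^ n)) sums (x * (\<Sum>n. diffs c n * x ^ n))"
    using termdiff_converges_all[OF assms] by (intro sums_mult summable_sums)
  then have "(\<lambda>n. real (Suc n) * c (Suc n) * x ^ Suc n) sums (x * (\<Sum>n. diffs c n * x ^ n))"
    by (simp add: diffs_def mult_ac)
  then show ?thesis
    by (subst (asm) sums_Suc_iff) simp
qed

lemma summable_pochhammer_power_series:
  fixes c :: "nat \<Rightarrow> real"
  assumes "\<And>y. summable (\<lambda>n. c n * y ^ n)"
  shows "summable (\<lambda>n. pochhammer (real n) k * c n * x ^ n)"
proof (induction k arbitrary: x)
  case 0
  show ?case using assms by simp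
next
  case (Suc k)
  have "summable (\<lambda>n. real n * (pochhammer (real n) k * c n) * x ^ n)"
    by (rule sums_summable[OF power_series_times_derivative_sums]) (rule Suc.IH)
  with Suc.IH[of x] have "summable (\<lambda>n. real k * (pochhammer (real n) k * c n * x ^ n)
      + real n * (pochhammer (real n) k * c n) * x ^ n)"
    by (intro summable_add summable_mult)
  then show ?case
    by (simp add: pochhammer_Suc algebra_simps)
qed

text \<open>The \<open>k\<close>-th derivative of \<open>t \<mapsto> \<Sum>\<^sub>m c\<^sub>m t^-m\<close>, computed termwise from
  \<open>(t^-m)^(k) = (-1)^k m(m+1)\<cdots>(m+k-1) t^-(m+k)\<close>.\<close>

definition inverse_series_tower :: "(nat \<Rightarrow> real) \<Rightarrow> nat \<Rightarrow> real \<Rightarrow> real" where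
  "inverse_series_tower c k t =
     (-1) ^ k * inverse t ^ k * (\<Sum>n. pochhammer (real n) k * c n * inverse t ^ n)"

lemma pochhammer_power_series_Suc:
  fixes c :: "nat \<Rightarrow> real"
  assumes "\<And>y. summable (\<lambda>n. c n * y ^ n)"
  shows "(\<Sum>n. pochhammer (real n) (Suc k) * c n * x ^ n) = real k * (\<Sum>n. pochhammer (real n) k * c n * x ^ n)
           + x * (\<Sum>n. diffs (\<lambda>n. pochhammer (real n) k * c n) n * x ^ n)"
proof -
  have "(\<lambda>n. real k * (pochhammer (real n) k * c n * x ^ n) + real n * (pochhammer (real n) k * c n) * x ^ n)
      sums (real k * (\<Sum>n. pochhammer (real n) k * c n * x ^ n)
           + x * (\<Sum>n. diffs (\<lambda>n. pochhammer (real n) k * c n) n * x ^ n))"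
    using summable_pochhammer_power_series[OF assms]
    by (intro sums_add sums_mult power_series_times_derivative_sums summable_sums) (simp add: mult.assoc)
  then show ?thesis
    by (simp add: pochhammer_Suc algebra_simps sums_iff)
qed

lemma has_real_derivative_inverse_series_tower:
  fixes c :: "nat \<Rightarrow> real"
  assumes "\<And>y. summable (\<lambda>n. c n * y ^ n)" "t > 0"
  shows "(inverse_series_tower c k has_real_derivative inverse_series_tower c (Suc k) t) (at t)"
proof -
  define a where "a n = pochhammer (real n) k * c n" for n
  define u where "u = inverse t"
  have summable_a: "summable (\<lambda>n. a n * y ^ n)" for y
    unfolding a_def using summable_pochhammer_power_series[OF assms(1)] by (simp add: mult.assoc)
  have "((\<lambda>t. (-1) ^ k * (inverse t ^ k * (\<Sum>n. a n * inverse t ^ n))) has_real_derivative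
      (-1) ^ k * ((real k * u ^ (k - 1) * (\<Sum>n. a n * u ^ n) + u ^ k * (\<Sum>n. diffs a n * u ^ n)) * - (u ^ 2)))
      (at t)"
    using assms(2)
    by (auto intro!: derivative_eq_intros DERIV_chain2[OF termdiffs_strong_converges_everywhere[OF summable_a]]
        simp: u_def power2_eq_square algebra_simps)
  moreover have "(-1) ^ k * ((real k * u ^ (k - 1) * (\<Sum>n. a n * u ^ n) + u ^ k * (\<Sum>n. diffs a n * u ^ n)) * - (u ^ 2))
      = inverse_series_tower c (Suc k) t"
    unfolding inverse_series_tower_def pochhammer_power_series_Suc[OF assms(1)] u_def[symmetric] a_def[symmetric]
    by (cases k) (simp_all add: power2_eq_square algebra_simps)
  ultimately show ?thesis
    unfolding inverse_series_tower_def a_def by (simp add: mult.assoc)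
qed

lemma deriv_tower_inverse_series_tower:
  fixes c :: "nat \<Rightarrow> real"
  assumes "\<And>y. summable (\<lambda>n. c n * y ^ n)"
  shows "deriv_tower (inverse_series_tower c) {0<..}"
  unfolding deriv_tower_def using has_real_derivative_inverse_series_tower[OF assms] by auto

lemma inverse_series_tower_alternating_nonneg:
  fixes c :: "nat \<Rightarrow> real"
  assumes "\<And>y. summable (\<lambda>n. c n * y ^ n)" "\<And>n. c n \<ge> 0" "t > 0"
  shows "0 \<le> (-1) ^ k * inverse_series_tower c k t"
proof -
  have "0 \<le> (\<Sum>n. pochhammer (real n) k * c n * inverse t ^ n)"
    using assms by (intro suminf_nonneg summable_pochhammer_power_series) (simp_all add: pochhammer_of_nat)
  then show ?thesis
    using assms(3) by (simp add: inverse_series_tower_def mult.assoc[symmetric] flip: power_mult_distrib)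
qed

definition exp_tail_coeff :: "nat \<Rightarrow> nat \<Rightarrow> real" where
  "exp_tail_coeff n m = (if n \<le> m then inverse (fact m) else 0)"

lemma exp_tail_sums: "(\<lambda>m. exp_tail_coeff n m * x ^ m) sums (exp x - (\<Sum>m<n. x ^ m / fact m))"
proof -
  have "(\<lambda>m. x ^ m / fact m - (if m \<in> {..<n} then x ^ m / fact m else 0))
      sums (exp x - (\<Sum>m<n. x ^ m / fact m))"
    using exp_converges[of x] by (intro sums_diff sums_If_finite_set) (simp_all add: divide_inverse mult.commute)
  moreover have "(\<lambda>m. x ^ m / fact m - (if m \<in> {..<n} then x ^ m / fact m else 0))
      = (\<lambda>m. exp_tail_coeff n m * x ^ m)"
    by (auto simp: exp_tail_coeff_def fun_eq_iff divide_inverse mult.commute)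
  ultimately show ?thesis by simp
qed

lemma summable_exp_tail: "summable (\<lambda>m. exp_tail_coeff n m * x ^ m)"
  using exp_tail_sums by (rule sums_summable)

lemma exp_tail_pos:
  assumes "x > 0"
  shows "0 < (\<Sum>m. exp_tail_coeff n m * x ^ m)"
proof (rule suminf_pos2)
  show "summable (\<lambda>m. exp_tail_coeff n m * x ^ m)"
    by (rule summable_exp_tail)
  show "0 \<le> exp_tail_coeff n m * x ^ m" for m
    using assms by (simp add: exp_tail_coeff_def)
  show "0 < exp_tail_coeff n n * x ^ n"
    using assms by (simp add: exp_tail_coeff_def)
qed

lemma exp_inverse_split:
  "exp (1 / t) = 1 + (inverse t + 1/2 * inverse t ^ 2 + 1/6 * inverse t ^ 3)
    + inverse_series_tower (exp_tail_coeff 4) 0 t"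
proof -
  have "inverse_series_tower (exp_tail_coeff 4) 0 t = exp (inverse t) - (\<Sum>m<4. inverse t ^ m / fact m)"
    using exp_tail_sums by (simp add: inverse_series_tower_def sums_iff)
  moreover have "(\<Sum>m<4. x ^ m / fact m) = 1 + x + 1/2 * x ^ 2 + 1/6 * x ^ 3" for x :: real
    by (simp add: eval_nat_numeral lessThan_Suc fact_numeral)
  ultimately show ?thesis
    by (simp add: inverse_eq_divide)
qed

text \<open>\<open>majorant_tower a k\<close> is the \<open>k\<close>-th derivative of \<open>x \<mapsto> q(x + a)\<close>.\<close>

definition majorant_tower :: "real \<Rightarrow> nat \<Rightarrow> real \<Rightarrow> real" where
  "majorant_tower a k x =
     recip_power_tower 1 a k x + 1/2 * recip_power_tower 2 a k x + 1/6 * recip_power_tower 3 a k x"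

lemma deriv_tower_majorant_tower: "a \<ge> 0 \<Longrightarrow> deriv_tower (majorant_tower a) {0<..}"
  unfolding majorant_tower_def[abs_def]
  by (intro deriv_tower_add deriv_tower_cmult deriv_tower_recip_power_tower)

lemma majorant_tower_0: "majorant_tower 0 0 t = inverse t + 1/2 * inverse t ^ 2 + 1/6 * inverse t ^ 3"
  by (simp add: majorant_tower_def recip_power_tower_def)

lemma majorant_tower_alternating_nonneg: "x > 0 \<Longrightarrow> 0 \<le> (-1) ^ k * majorant_tower 0 k x"
  unfolding majorant_tower_def distrib_left
  by (intro add_nonneg_nonneg)
    (simp_all add: mult.left_commute[of "(-1) ^ k"] recip_power_tower_alternating_nonneg)

lemma majorant_defect_identity:
  assumes "x > 0"
  shows "majorant_tower 0 0 x - majorant_tower 1 0 x - recip_power_tower 2 0 0 x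
    = 1/6 * (recip_power_tower 3 0 0 x * recip_power_tower 3 1 0 x)"
proof -
  define a where "a = inverse x"
  define b where "b = inverse (x + 1)"
  have "a * x = 1" "b * (x + 1) = 1"
    using assms by (simp_all add: a_def b_def)
  then have "a + 1/2 * a ^ 2 + 1/6 * a ^ 3 - (b + 1/2 * b ^ 2 + 1/6 * b ^ 3) - a ^ 2 = 1/6 * (a ^ 3 * b ^ 3)"
    by algebra
  then show ?thesis
    by (simp add: majorant_tower_def recip_power_tower_def a_def b_def)
qed

lemma majorant_defect_alternating_nonneg:
  assumes "x > 0"
  shows "0 \<le> (-1) ^ k * (majorant_tower 0 k x - majorant_tower 1 k x - recip_power_tower 2 0 k x)"
proof -
  have defect: "majorant_tower 0 k x - majorant_tower 1 k x - recip_power_tower 2 0 k x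
      = 1/6 * prod_tower (recip_power_tower 3 0) (recip_power_tower 3 1) k x"
  proof (rule deriv_tower_unique[where S = "{0<..}"
      and D = "\<lambda>k x. majorant_tower 0 k x - majorant_tower 1 k x - recip_power_tower 2 0 k x"
      and E = "\<lambda>k x. 1/6 * prod_tower (recip_power_tower 3 0) (recip_power_tower 3 1) k x"])
    show "deriv_tower (\<lambda>k x. majorant_tower 0 k x - majorant_tower 1 k x - recip_power_tower 2 0 k x) {0<..}"
      by (intro deriv_tower_diff deriv_tower_majorant_tower deriv_tower_recip_power_tower) simp_all
    show "deriv_tower (\<lambda>k x. 1/6 * prod_tower (recip_power_tower 3 0) (recip_power_tower 3 1) k x) {0<..}"
      by (intro deriv_tower_cmult deriv_tower_prod_tower deriv_tower_recip_power_tower) simp_all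
    show "majorant_tower 0 0 y - majorant_tower 1 0 y - recip_power_tower 2 0 0 y
        = 1/6 * prod_tower (recip_power_tower 3 0) (recip_power_tower 3 1) 0 y" if "y \<in> {0<..}" for y
      using majorant_defect_identity[of y] that by (simp add: prod_tower_def)
  qed (use assms in simp_all)
  have "0 \<le> (-1) ^ k * prod_tower (recip_power_tower 3 0) (recip_power_tower 3 1) k x"
    using assms by (intro prod_tower_alternating_nonneg recip_power_tower_alternating_nonneg) simp_all
  then show ?thesis
    unfolding defect by (simp add: mult.left_commute)
qed

lemma majorant_tower_telescope:
  assumes "y > 0"
  shows "(\<Sum>j<N. fact (Suc k) * inverse (y + real j) ^ (k + 2))
    \<le> (-1) ^ k * majorant_tower 0 k y - (-1) ^ k * majorant_tower 0 k (y + real N)"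
proof (induction N)
  case (Suc N)
  let ?y = "y + real N"
  have "(-1) ^ k * recip_power_tower 2 0 k ?y = fact (Suc k) * inverse ?y ^ (k + 2)"
    unfolding recip_power_tower_alternating by (simp add: pochhammer_fact pochhammer_rec add.commute)
  moreover have "majorant_tower 1 k ?y = majorant_tower 0 k (y + real (Suc N))"
    by (simp add: majorant_tower_def recip_power_tower_def add_ac)
  ultimately have "fact (Suc k) * inverse ?y ^ (k + 2)
      \<le> (-1) ^ k * majorant_tower 0 k ?y - (-1) ^ k * majorant_tower 0 k (y + real (Suc N))"
    using majorant_defect_alternating_nonneg[of ?y k] assms by (simp add: algebra_simps)
  with Suc.IH show ?case
    by simp
qed simp

lemma Polygamma_le_majorant_tower:
  assumes "y > 0"
  shows "(-1) ^ k * Polygamma (Suc k) y \<le> (-1) ^ k * majorant_tower 0 k y"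
proof -
  have "(\<lambda>j. inverse ((y + of_nat j) ^ Suc (Suc k))) sums ((-1) ^ Suc (Suc k) * Polygamma (Suc k) y / fact (Suc k))"
    using assms by (intro Polygamma_LIMSEQ) auto
  from sums_mult[OF this, of "fact (Suc k)"]
  have series: "(\<lambda>j. fact (Suc k) * inverse (y + real j) ^ (k + 2)) sums ((-1) ^ k * Polygamma (Suc k) y)"
    by (simp add: power_inverse)
  have "(\<Sum>j. fact (Suc k) * inverse (y + real j) ^ (k + 2)) \<le> (-1) ^ k * majorant_tower 0 k y"
  proof (rule suminf_le_const)
    show "summable (\<lambda>j. fact (Suc k) * inverse (y + real j) ^ (k + 2))"
      using series by (rule sums_summable)
    show "(\<Sum>j<N. fact (Suc k) * inverse (y + real j) ^ (k + 2)) \<le> (-1) ^ k * majorant_tower 0 k y" for N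
      using majorant_tower_telescope[OF assms, of k N] majorant_tower_alternating_nonneg[of "y + real N" k] assms
      by simp
  qed
  then show ?thesis
    using series by (simp add: sums_iff)
qed

definition exp_inverse_minus_trigamma_tower :: "nat \<Rightarrow> real \<Rightarrow> real" where
  "exp_inverse_minus_trigamma_tower k t = inverse_series_tower (exp_tail_coeff 4) k t
     + (majorant_tower 0 k t - Polygamma (Suc k) t) + (if k = 0 then 1 else 0)"

lemma deriv_tower_exp_inverse_minus_trigamma_tower:
  "deriv_tower exp_inverse_minus_trigamma_tower {0<..}"
  using deriv_tower_Polygamma[of 1]
  unfolding exp_inverse_minus_trigamma_tower_def[abs_def]
  by (intro deriv_tower_add deriv_tower_diff deriv_tower_inverse_series_tower summable_exp_tail
      deriv_tower_majorant_tower deriv_tower_const) simp_all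

lemma exp_inverse_minus_trigamma_tower_0:
  "exp_inverse_minus_trigamma_tower 0 t = exp (1 / t) - Polygamma 1 t"
  using exp_inverse_split[of t] majorant_tower_0[of t]
  by (simp add: exp_inverse_minus_trigamma_tower_def)

lemma exp_inverse_minus_trigamma_tower_alternating_nonneg:
  assumes "t > 0"
  shows "0 \<le> (-1) ^ k * exp_inverse_minus_trigamma_tower k t"
proof -
  have "0 \<le> (-1) ^ k * inverse_series_tower (exp_tail_coeff 4) k t"
    using assms by (intro inverse_series_tower_alternating_nonneg summable_exp_tail)
      (simp_all add: exp_tail_coeff_def)
  moreover have "(-1) ^ k * Polygamma (Suc k) t \<le> (-1) ^ k * majorant_tower 0 k t"
    using Polygamma_le_majorant_tower[OF assms] .
  ultimately show ?thesis
    by (cases "k = 0") (simp_all add: exp_inverse_minus_trigamma_tower_def algebra_simps)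
qed

lemma trigamma_less_exp_inverse_minus_one:
  fixes t :: real
  assumes "t > 0"
  shows "Polygamma 1 t < exp (1 / t) - 1"
proof -
  have "0 < inverse_series_tower (exp_tail_coeff 4) 0 t"
    using exp_tail_pos[of "inverse t" 4] assms by (simp add: inverse_series_tower_def)
  moreover have "Polygamma 1 t \<le> majorant_tower 0 0 t"
    using Polygamma_le_majorant_tower[OF assms, of 0] by simp
  ultimately show ?thesis
    using exp_inverse_split[of t] majorant_tower_0[of t] by simp
qed

theorem lemma2p2:
  shows "(\<forall>t::real. t > 0 \<longrightarrow> Polygamma 1 t < exp (1 / t) - 1)
         \<and> completely_monotonic_on (\<lambda>t. exp (1 / t) - Polygamma 1 t) {0<..}"
proof
  show "\<forall>t::real. t > 0 \<longrightarrow> Polygamma 1 t < exp (1 / t) - 1"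
    using trigamma_less_exp_inverse_minus_one by blast
  show "completely_monotonic_on (\<lambda>t. exp (1 / t) - Polygamma 1 t) {0<..}"
    using deriv_tower_exp_inverse_minus_trigamma_tower exp_inverse_minus_trigamma_tower_0
      exp_inverse_minus_trigamma_tower_alternating_nonneg
    by (intro completely_monotonic_onI_deriv_tower[where D = exp_inverse_minus_trigamma_tower]) auto
qed

end
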